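(* For each DISTRIBUTED $\in\{$LOCAL, CONGEST, CONGESTED-CLIQUE$\}$: Multicolored Independent Set $\in$ DISTRIBUTED-W$[1]$ and Red-Blue Dominating Set $\in$ DISTRIBUTED-W$[2]$.
   Context: Distributed models: network = finite connected undirected graph $G$, $n=|V(G)|$, unique $O(\log n)$-bit identifiers; nodes initially know their identifier, neighbours' identifiers, input labels and the parameter; synchronous rounds. LOCAL: unbounded messages to neighbours; CONGEST: $O(\log n)$-bit messages to each neighbour per round; CONGESTED-CLIQUE: $O(\log n)$-bit messages to every node per round. $\mathcal G_{s,t}$: finite connected graphs with unary predicates $P_1..P_s$ and binary predicates $E_1..E_t$; a parameterized problem is $\mathsf P\subseteq\mathcal G_{s,t}\times\mathbb N$. Reductions: a DISTRIBUTED algorithm turning $(G,k)$ into $(G',k')$, represented by $\nu:V(G')\to V(G)$ and $\eta$ mapping each $\{x,y\}\in E(G')$ to a path between $\nu(x),\nu(y)$ (stored at nodes, all nodes know $k'$); radius = max path length; congestion = max number of image paths through an edge. $\mathsf P_1\le_{\mathrm{DISTRIBUTED}}\mathsf P_2$ if for computable $s,r,c,t,p$ there is such a reduction with $|V(G')|\le|V(G)|^{s(k)}$, radius $\le r(k)$, congestion $\le c(k)$ (no congestion bound for LOCAL), $\le t(k)$ rounds, $k'\le p(k)$, preserving membership. $[\mathcal P]^{\mathrm{DISTRIBUTED}}$: problems reducing to a member of $\mathcal P$. Logic: first-order formulas over $\{P_1,..,P_s,E_1,..,E_t\}$ from atoms $x=y,P_i(x),E_j(x,y)$ with $\neg,\wedge,\vee,\exists,\forall$.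 $\Sigma_0=\Pi_0$ = quantifier-free; $\Sigma_{t+1}$ = formulas $\exists x_1\dots\exists x_\ell\,\varphi$ with $\varphi\in\Pi_t$; $\Pi_{t+1}$ = $\forall x_1\dots\forall x_\ell\,\varphi$ with $\varphi\in\Sigma_t$; $\Sigma_{t,1}$ = formulas of $\Sigma_t$ whose quantifier blocks after the leading existential block have length at most 1. Fix a computable injective encoding enc of formulas as bit strings and a computable bijection num from bit strings to $\mathbb N$. For a set $\Phi$ of sentences, DMC-$\Phi$: given a coloured graph $G$ and integer $k$, decide whether there is $\varphi\in\Phi$ with num(enc($\varphi$))$=k$ and $G\models\varphi$; parameter $k$. DISTRIBUTED-W$[t]:=[\text{DMC-}\Sigma_{t,1}]^{\mathrm{DISTRIBUTED}}$. Multicolored Independent Set: instance $k\ge1$, $G\in\mathcal G_{k,1}$, each vertex in at most one of $P_1..P_k$; yes iff there are pairwise non-adjacent $v_1\in P_1,..,v_k\in P_k$; parameter $k$. Red-Blue Dominating Set: a connected graph with vertices coloured red or blue and integer $k$; yes iff at most $k$ red vertices dominate (are adjacent to) all blue vertices; parameter $k$. *)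

theory Defs
  imports Main "HOL-Library.Nat_Bijection"
begin

section \<open>Computability (mu-recursive functions)\<close>

datatype recf = Zero | Succ | Proj nat | Comp recf "recf list"
  | PrimRec recf recf | Minimize recf

inductive evalr :: "recf \<Rightarrow> nat list \<Rightarrow> nat \<Rightarrow> bool" where
  ev_zero: "evalr Zero xs 0"
| ev_succ: "evalr Succ (x # xs) (Suc x)"
| ev_proj: "i < length xs \<Longrightarrow> evalr (Proj i) xs (xs ! i)"
| ev_comp: "length ys = length gs \<Longrightarrow> (\<forall>i<length gs. evalr (gs ! i) xs (ys ! i))
     \<Longrightarrow> evalr f ys z \<Longrightarrow> evalr (Comp f gs) xs z"
| ev_pr0: "evalr f xs z \<Longrightarrow> evalr (PrimRec f g) (0 # xs) z"
| ev_prS: "evalr (PrimRec f g) (n # xs) y \<Longrightarrow> evalr g (y # n # xs) z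
     \<Longrightarrow> evalr (PrimRec f g) (Suc n # xs) z"
| ev_mu: "evalr f (n # xs) 0 \<Longrightarrow> (\<forall>m<n. \<exists>y. y \<noteq> 0 \<and> evalr f (m # xs) y)
     \<Longrightarrow> evalr (Minimize f) xs n"

definition computable :: "(nat \<Rightarrow> nat) \<Rightarrow> bool" where
  "computable f \<longleftrightarrow> (\<exists>e. \<forall>n. evalr e [n] (f n))"

section \<open>Coloured graphs (vertices = identifiers)\<close>

text \<open>Unary predicate P_i is "unary G i", binary predicate E_j is "binary G j";
  only indices 1..s resp. 1..t are used by members of G_{s,t}.\<close>

record cgraph =
  verts :: "nat set"
  unary :: "nat \<Rightarrow> nat \<Rightarrow> bool"
  binary :: "nat \<Rightarrow> nat \<Rightarrow> nat \<Rightarrow> bool"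

definition adj :: "cgraph \<Rightarrow> nat \<Rightarrow> nat \<Rightarrow> bool" where
  "adj G u v \<longleftrightarrow> u \<noteq> v \<and> u \<in> verts G \<and> v \<in> verts G \<and>
     (\<exists>j. binary G j u v \<or> binary G j v u)"

definition base_ok :: "cgraph \<Rightarrow> bool" where
  "base_ok G \<longleftrightarrow> finite (verts G) \<and> verts G \<noteq> {} \<and>
     (\<forall>i v. unary G i v \<longrightarrow> v \<in> verts G) \<and>
     (\<forall>j u v. binary G j u v \<longrightarrow> u \<in> verts G \<and> v \<in> verts G) \<and>
     (\<forall>u\<in>verts G. \<forall>v\<in>verts G. (u, v) \<in> {(a, b). adj G a b}\<^sup>*)"

definition inG :: "nat \<Rightarrow> nat \<Rightarrow> cgraph \<Rightarrow> bool" where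
  "inG s t G \<longleftrightarrow> base_ok G \<and>
     (\<forall>i v. unary G i v \<longrightarrow> 1 \<le> i \<and> i \<le> s) \<and>
     (\<forall>j u v. binary G j u v \<longrightarrow> 1 \<le> j \<and> j \<le> t)"

definition coloured :: "cgraph \<Rightarrow> bool" where
  "coloured G \<longleftrightarrow> (\<exists>s t. inG s t G)"

record pproblem =
  pdom :: "(cgraph \<times> nat) set"
  pyes :: "(cgraph \<times> nat) set"

section \<open>First-order logic\<close>

datatype fm = FEq nat nat | FP nat nat | FE nat nat nat | FNeg fm | FConj fm fm
  | FDisj fm fm | FEx nat fm | FAll nat fm

fun sat :: "cgraph \<Rightarrow> (nat \<Rightarrow> nat) \<Rightarrow> fm \<Rightarrow> bool" where
  "sat G a (FEq x y) = (a x = a y)"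
| "sat G a (FP i x) = unary G i (a x)"
| "sat G a (FE j x y) = binary G j (a x) (a y)"
| "sat G a (FNeg f) = (\<not> sat G a f)"
| "sat G a (FConj f g) = (sat G a f \<and> sat G a g)"
| "sat G a (FDisj f g) = (sat G a f \<or> sat G a g)"
| "sat G a (FEx x f) = (\<exists>v\<in>verts G. sat G (a(x := v)) f)"
| "sat G a (FAll x f) = (\<forall>v\<in>verts G. sat G (a(x := v)) f)"

fun fvars :: "fm \<Rightarrow> nat set" where
  "fvars (FEq x y) = {x, y}"
| "fvars (FP i x) = {x}"
| "fvars (FE j x y) = {x, y}"
| "fvars (FNeg f) = fvars f"
| "fvars (FConj f g) = fvars f \<union> fvars g"
| "fvars (FDisj f g) = fvars f \<union> fvars g"
| "fvars (FEx x f) = fvars f - {x}"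
| "fvars (FAll x f) = fvars f - {x}"

definition sentence :: "fm \<Rightarrow> bool" where
  "sentence f \<longleftrightarrow> fvars f = {}"

definition models :: "cgraph \<Rightarrow> fm \<Rightarrow> bool" where
  "models G f \<longleftrightarrow> sat G (\<lambda>_. 0) f"

fun qfree :: "fm \<Rightarrow> bool" where
  "qfree (FNeg f) = qfree f"
| "qfree (FConj f g) = (qfree f \<and> qfree g)"
| "qfree (FDisj f g) = (qfree f \<and> qfree g)"
| "qfree (FEx x f) = False"
| "qfree (FAll x f) = False"
| "qfree _ = True"

definition exs :: "nat list \<Rightarrow> fm \<Rightarrow> fm" where
  "exs xs f = foldr FEx xs f"

definition alls :: "nat list \<Rightarrow> fm \<Rightarrow> fm" where
  "alls xs f = foldr FAll xs f"

text \<open>Sigma_t / Pi_t with all quantifier blocks of length at most 1.\<close>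
fun Sig1 :: "nat \<Rightarrow> fm set" and Pi1 :: "nat \<Rightarrow> fm set" where
  "Sig1 0 = {f. qfree f}"
| "Pi1 0 = {f. qfree f}"
| "Sig1 (Suc t) = {exs xs f | xs f. length xs \<le> 1 \<and> f \<in> Pi1 t}"
| "Pi1 (Suc t) = {alls xs f | xs f. length xs \<le> 1 \<and> f \<in> Sig1 t}"

text \<open>Sigma_{t,1}: leading existential block arbitrary, later blocks of length at most 1.\<close>
fun Sigma_t1 :: "nat \<Rightarrow> fm set" where
  "Sigma_t1 0 = {f. qfree f}"
| "Sigma_t1 (Suc t) = {exs xs f | xs f. f \<in> Pi1 t}"

text \<open>A fixed computable injective coding of formulas by natural numbers
  (playing the role of num o enc).\<close>
fun fcode :: "fm \<Rightarrow> nat" where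
  "fcode (FEq x y) = prod_encode (0, prod_encode (x, y))"
| "fcode (FP i x) = prod_encode (1, prod_encode (i, x))"
| "fcode (FE j x y) = prod_encode (2, prod_encode (j, prod_encode (x, y)))"
| "fcode (FNeg f) = prod_encode (3, fcode f)"
| "fcode (FConj f g) = prod_encode (4, prod_encode (fcode f, fcode g))"
| "fcode (FDisj f g) = prod_encode (5, prod_encode (fcode f, fcode g))"
| "fcode (FEx x f) = prod_encode (6, prod_encode (x, fcode f))"
| "fcode (FAll x f) = prod_encode (7, prod_encode (x, fcode f))"

definition DMC :: "fm set \<Rightarrow> pproblem" where
  "DMC \<Phi> = \<lparr> pdom = {(G, k). coloured G},
     pyes = {(G, k). coloured G \<and>
        (\<exists>f\<in>\<Phi>. sentence f \<and> fcode f = k \<and> models G f)} \<rparr>"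

section \<open>Distributed algorithms\<close>

datatype dmodel = LOCAL | CONGEST | CONGESTED_CLIQUE

record local_view =
  lv_k :: nat
  lv_id :: nat
  lv_nbrs :: "nat set"
  lv_unary :: "nat set"
  lv_binary :: "(nat \<times> nat \<times> nat) set"

definition view :: "cgraph \<Rightarrow> nat \<Rightarrow> nat \<Rightarrow> local_view" where
  "view G k v = \<lparr> lv_k = k, lv_id = v, lv_nbrs = {w. adj G v w},
     lv_unary = {i. unary G i v},
     lv_binary = {(j, a, b). binary G j a b \<and> (a = v \<or> b = v)} \<rparr>"

text \<open>Local output of a node: the G'-vertices x it hosts (nu x = this node), their
  unary labels, the binary facts E_j(x,y) for hosted x, the stored paths eta for
  edges {x,y} with x hosted and x < y, and the new parameter k'.\<close>
record lout =
  o_verts :: "nat set"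
  o_lab :: "nat \<Rightarrow> nat \<Rightarrow> bool"
  o_rel :: "(nat \<times> nat \<times> nat) set"
  o_path :: "nat \<Rightarrow> nat \<Rightarrow> nat list"
  o_k :: nat

text \<open>States and messages are natural numbers (which can encode any finite data);
  local computation is unrestricted. send: state, target id -> optional message;
  update: state, received messages by sender id -> state.\<close>
record algo =
  a_init :: "local_view \<Rightarrow> nat"
  a_send :: "nat \<Rightarrow> nat \<Rightarrow> nat option"
  a_update :: "nat \<Rightarrow> (nat \<Rightarrow> nat option) \<Rightarrow> nat"
  a_out :: "nat \<Rightarrow> lout"

definition can_send :: "dmodel \<Rightarrow> cgraph \<Rightarrow> nat \<Rightarrow> nat \<Rightarrow> bool" where
  "can_send M G u v \<longleftrightarrow> (if M = CONGESTED_CLIQUE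
      then u \<in> verts G \<and> v \<in> verts G \<and> u \<noteq> v else adj G u v)"

fun run :: "algo \<Rightarrow> dmodel \<Rightarrow> cgraph \<Rightarrow> nat \<Rightarrow> nat \<Rightarrow> nat \<Rightarrow> nat" where
  "run A M G k 0 v = a_init A (view G k v)"
| "run A M G k (Suc r) v = a_update A (run A M G k r v)
     (\<lambda>u. if can_send M G u v then a_send A (run A M G k r u) v else None)"

text \<open>Bandwidth: in CONGEST / CONGESTED-CLIQUE every message is a number below
  n^B, i.e. has O(log n) bits.\<close>
definition bandwidth_ok :: "algo \<Rightarrow> dmodel \<Rightarrow> cgraph \<Rightarrow> nat \<Rightarrow> nat \<Rightarrow> nat \<Rightarrow> bool" where
  "bandwidth_ok A M G k T B \<longleftrightarrow> M = LOCAL \<or>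
     (\<forall>r<T. \<forall>u v. can_send M G u v \<longrightarrow>
        (\<forall>m. a_send A (run A M G k r u) v = Some m \<longrightarrow>
             m < (max 2 (card (verts G))) ^ B))"

definition out_graph :: "cgraph \<Rightarrow> (nat \<Rightarrow> lout) \<Rightarrow> cgraph" where
  "out_graph G Out = (let V' = (\<Union>v\<in>verts G. o_verts (Out v)) in
     \<lparr> verts = V',
       unary = (\<lambda>i x. \<exists>v\<in>verts G. x \<in> o_verts (Out v) \<and> o_lab (Out v) i x),
       binary = (\<lambda>j x y. \<exists>v\<in>verts G. x \<in> o_verts (Out v) \<and> (j, x, y) \<in> o_rel (Out v)
                      \<and> y \<in> V') \<rparr>)"

definition host :: "cgraph \<Rightarrow> (nat \<Rightarrow> lout) \<Rightarrow> nat \<Rightarrow> nat" where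
  "host G Out x = (THE v. v \<in> verts G \<and> x \<in> o_verts (Out v))"

definition eta :: "cgraph \<Rightarrow> (nat \<Rightarrow> lout) \<Rightarrow> nat \<Rightarrow> nat \<Rightarrow> nat list" where
  "eta G Out x y = (if x < y then o_path (Out (host G Out x)) x y
                  else rev (o_path (Out (host G Out y)) y x))"

definition is_path :: "cgraph \<Rightarrow> nat list \<Rightarrow> nat \<Rightarrow> nat \<Rightarrow> bool" where
  "is_path G p a b \<longleftrightarrow> p \<noteq> [] \<and> hd p = a \<and> last p = b \<and>
     (\<forall>i. Suc i < length p \<longrightarrow> adj G (p ! i) (p ! Suc i))"

definition uses_edge :: "nat list \<Rightarrow> nat \<Rightarrow> nat \<Rightarrow> bool" where
  "uses_edge p a b \<longleftrightarrow> (\<exists>i. Suc i < length p \<and> {p ! i, p ! Suc i} = {a, b})"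

definition red_ok :: "dmodel \<Rightarrow> pproblem \<Rightarrow> pproblem \<Rightarrow> algo \<Rightarrow>
    (nat \<Rightarrow> nat) \<Rightarrow> (nat \<Rightarrow> nat) \<Rightarrow> (nat \<Rightarrow> nat) \<Rightarrow> (nat \<Rightarrow> nat) \<Rightarrow> (nat \<Rightarrow> nat) \<Rightarrow>
    nat \<Rightarrow> cgraph \<Rightarrow> nat \<Rightarrow> bool" where
  "red_ok M P1 P2 A s r c t p B G k \<longleftrightarrow>
     (let Out = (\<lambda>v. a_out A (run A M G k (t k) v)); G' = out_graph G Out in
      bandwidth_ok A M G k (t k) B \<and>
      (\<forall>v\<in>verts G. \<forall>w\<in>verts G. v \<noteq> w \<longrightarrow> o_verts (Out v) \<inter> o_verts (Out w) = {}) \<and>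
      (\<exists>k'. (\<forall>v\<in>verts G. o_k (Out v) = k') \<and> k' \<le> p k \<and>
            (G', k') \<in> pdom P2 \<and> ((G, k) \<in> pyes P1 \<longleftrightarrow> (G', k') \<in> pyes P2)) \<and>
      card (verts G') \<le> card (verts G) ^ s k \<and>
      (\<forall>x y. adj G' x y \<longrightarrow> x < y \<longrightarrow>
          is_path G (eta G Out x y) (host G Out x) (host G Out y) \<and>
          length (eta G Out x y) - 1 \<le> r k) \<and>
      (M \<noteq> LOCAL \<longrightarrow> (\<forall>a b. adj G a b \<longrightarrow>
          card {(x, y). adj G' x y \<and> x < y \<and> uses_edge (eta G Out x y) a b} \<le> c k)))"

text \<open>P1 \<le>_M P2. Identifiers are the vertex names; they are Out(log n)-bit, i.e. below
  n^cid for a constant cid; the bandwidth constant B may depend on cid.\<close>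
definition dreduces :: "dmodel \<Rightarrow> pproblem \<Rightarrow> pproblem \<Rightarrow> bool" where
  "dreduces M P1 P2 \<longleftrightarrow>
     (\<exists>s r c t p. computable s \<and> computable r \<and> computable c \<and> computable t \<and>
        computable p \<and>
        (\<exists>A. \<forall>cid. \<exists>B. \<forall>G k. (G, k) \<in> pdom P1 \<and>
            verts G \<subseteq> {..< (max 2 (card (verts G))) ^ cid} \<longrightarrow>
            red_ok M P1 P2 A s r c t p B G k))"

definition DistW :: "dmodel \<Rightarrow> nat \<Rightarrow> pproblem set" where
  "DistW M t = {P. dreduces M P (DMC (Sigma_t1 t))}"

definition MIS :: pproblem where
  "MIS = \<lparr> pdom = {(G, k). k \<ge> 1 \<and> inG k 1 G \<and>
              (\<forall>v i j. unary G i v \<and> unary G j v \<longrightarrow> i = j)},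
           pyes = {(G, k). k \<ge> 1 \<and> inG k 1 G \<and>
              (\<forall>v i j. unary G i v \<and> unary G j v \<longrightarrow> i = j) \<and>
              (\<exists>f. (\<forall>i\<in>{1..k}. unary G i (f i)) \<and>
                   (\<forall>i\<in>{1..k}. \<forall>j\<in>{1..k}. i \<noteq> j \<longrightarrow> \<not> adj G (f i) (f j)))} \<rparr>"

text \<open>Red = P_1, blue = P_2; every vertex has exactly one colour.\<close>
definition RBDS :: pproblem where
  "RBDS = \<lparr> pdom = {(G, k). inG 2 1 G \<and> (\<forall>v\<in>verts G. unary G 1 v \<longleftrightarrow> \<not> unary G 2 v)},
            pyes = {(G, k). inG 2 1 G \<and> (\<forall>v\<in>verts G. unary G 1 v \<longleftrightarrow> \<not> unary G 2 v) \<and>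
              (\<exists>D. D \<subseteq> {v. unary G 1 v} \<and> card D \<le> k \<and>
                   (\<forall>b. unary G 2 b \<longrightarrow> (\<exists>d\<in>D. adj G d b)))} \<rparr>"

end

theory Submission
  imports Defs
begin

text \<open>Both problems are first-order definable by sentences whose quantifier prefix depends only on
  the parameter: a multicoloured independent set is witnessed by
  \<open>\<exists>x\<^sub>1\<dots>x\<^sub>k. \<And>\<^sub>i P\<^sub>i(x\<^sub>i) \<and> \<And>\<^sub>i\<^sub>j \<not>E(x\<^sub>i,x\<^sub>j)\<close> (a \<open>\<Sigma>\<^sub>1\<close> sentence), a red-blue dominating set by
  \<open>\<exists>x\<^sub>1\<dots>x\<^sub>k \<forall>y. \<And>\<^sub>i red(x\<^sub>i) \<and> (blue(y) \<longrightarrow> \<Or>\<^sub>i E(x\<^sub>i,y))\<close> (a \<open>\<Sigma>\<^sub>2,\<^sub>1\<close> sentence).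
  The reduction therefore needs no communication at all: in zero rounds every node outputs
  itself with its labels and incident edges, and the new parameter is the code of that sentence.
  What remains is to bound this code by a computable function of \<open>k\<close>, which follows from a
  bound on the code of a formula in terms of its depth and the largest number occurring in it.\<close>

lemma evalr_ProjI: "i < length xs \<Longrightarrow> z = xs ! i \<Longrightarrow> evalr (Proj i) xs z"
  using ev_proj by simp

lemma evalr_Comp1: "evalr g xs y \<Longrightarrow> evalr f [y] z \<Longrightarrow> evalr (Comp f [g]) xs z"
  by (rule ev_comp[where ys = "[y]"]) auto

lemma evalr_Comp2:
  "evalr g xs y \<Longrightarrow> evalr h xs y' \<Longrightarrow> evalr f [y, y'] z \<Longrightarrow> evalr (Comp f [g, h]) xs z"
  by (rule ev_comp[where ys = "[y, y']"]) (auto simp: less_Suc_eq)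

lemma evalr_Succ: "evalr Succ [n] (Suc n)"
  using ev_succ[of n "[]"] .

definition add_recf :: recf where
  "add_recf = PrimRec (Proj 0) (Comp Succ [Proj 0])"

lemma evalr_add_recf: "evalr add_recf [n, m] (n + m)"
  by (induction n) (auto simp: add_recf_def intro!: ev_pr0 ev_prS evalr_ProjI evalr_Comp1 evalr_Succ)

definition mult_recf :: recf where
  "mult_recf = PrimRec Zero (Comp add_recf [Proj 0, Proj 2])"

lemma evalr_mult_recf: "evalr mult_recf [n, m] (n * m)"
proof (induction n)
  case 0
  show ?case using ev_pr0[OF ev_zero] by (simp add: mult_recf_def)
next
  case (Suc n)
  have "evalr (Comp add_recf [Proj 0, Proj 2]) [n * m, n, m] (Suc n * m)"
    using evalr_add_recf[of "n * m" m] by (auto intro!: evalr_Comp2 evalr_ProjI simp: add.commute)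
  with Suc show ?case unfolding mult_recf_def by (rule ev_prS)
qed

fun const_recf :: "nat \<Rightarrow> recf" where
  "const_recf 0 = Zero"
| "const_recf (Suc c) = Comp Succ [const_recf c]"

lemma evalr_const_recf: "evalr (const_recf c) xs c"
  by (induction c) (auto intro: ev_zero evalr_Comp1 evalr_Succ)

lemma computable_const: "computable (\<lambda>_. c)"
  unfolding computable_def using evalr_const_recf by blast

definition iterate_recf :: "recf \<Rightarrow> recf" where
  "iterate_recf e = PrimRec (Proj 0) (Comp e [Proj 0])"

lemma evalr_iterate_recf:
  assumes "\<And>y. evalr e [y] (f y)"
  shows "evalr (iterate_recf e) [n, x] ((f ^^ n) x)"
  by (induction n) (auto simp: iterate_recf_def intro!: ev_pr0 ev_prS evalr_ProjI evalr_Comp1 assms)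

text \<open>The offset 15 leaves room for the constructor tags \<open>0..7\<close> of \<open>fcode\<close>.\<close>
definition pair_bound :: "nat \<Rightarrow> nat" where
  "pair_bound y = (y + y + 15) * (y + y + 15)"

definition code_bound :: "nat \<Rightarrow> nat" where
  "code_bound k = (pair_bound ^^ (2 * ((k + 2) * (k + 2)) + 3)) (k + 2)"

lemma computable_code_bound: "computable code_bound"
proof -
  define plus_recf where "plus_recf c e = Comp add_recf [e, const_recf c]" for c e
  define times_recf where "times_recf e e' = Comp mult_recf [e, e']" for e e'
  define pair_bound_recf where "pair_bound_recf =
    times_recf (plus_recf 15 (Comp add_recf [Proj 0, Proj 0])) (plus_recf 15 (Comp add_recf [Proj 0, Proj 0]))"
  have plus: "evalr e xs y \<Longrightarrow> evalr (plus_recf c e) xs (y + c)" for c e xs y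
    unfolding plus_recf_def by (rule evalr_Comp2[OF _ evalr_const_recf evalr_add_recf])
  have times: "evalr e xs y \<Longrightarrow> evalr e' xs y' \<Longrightarrow> evalr (times_recf e e') xs (y * y')"
    for e e' xs y y'
    unfolding times_recf_def by (rule evalr_Comp2[OF _ _ evalr_mult_recf])
  have proj: "evalr (Proj 0) [k] k" for k
    by (rule evalr_ProjI) auto
  have "evalr pair_bound_recf [y] (pair_bound y)" for y
    unfolding pair_bound_def pair_bound_recf_def
    by (intro times plus evalr_Comp2[OF proj proj evalr_add_recf])
  then have "evalr (Comp (iterate_recf pair_bound_recf)
      [plus_recf 3 (times_recf (const_recf 2) (times_recf (plus_recf 2 (Proj 0)) (plus_recf 2 (Proj 0)))),
       plus_recf 2 (Proj 0)]) [k] (code_bound k)" for k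
    unfolding code_bound_def
    by (intro evalr_Comp2[OF _ _ evalr_iterate_recf] plus times proj evalr_const_recf)
  then show ?thesis
    unfolding computable_def by blast
qed

section \<open>A bound on the code of a formula\<close>

lemma fcode_inject: "fcode f = fcode g \<longleftrightarrow> f = g"
  by (induction f arbitrary: g; case_tac g; auto)

lemma triangle_le_square: "triangle n \<le> n * n"
  by (induction n) auto

lemma prod_encode_le_pair_bound: "a \<le> y + 7 \<Longrightarrow> b \<le> y + 7 \<Longrightarrow> prod_encode (a, b) \<le> pair_bound y"
proof -
  assume a: "a \<le> y + 7" and b: "b \<le> y + 7"
  have "prod_encode (a, b) \<le> (a + b + 1) * (a + b + 1)"
    using triangle_le_square[of "a + b"] by (simp add: prod_encode_def)
  also have "\<dots> \<le> pair_bound y"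
    unfolding pair_bound_def using a b by (intro mult_mono) auto
  finally show ?thesis .
qed

lemma le_pair_bound: "y \<le> pair_bound y"
  unfolding pair_bound_def by (metis le_add1 le_square order_trans)

lemma mono_pair_bound: "mono pair_bound"
  unfolding pair_bound_def by (intro monoI mult_mono) auto

lemma funpow_pair_bound_mono: "i \<le> j \<Longrightarrow> x \<le> y \<Longrightarrow> (pair_bound ^^ i) x \<le> (pair_bound ^^ j) y"
  by (rule funpow_mono2[OF mono_pair_bound _ _ le_pair_bound])

lemma tagged_prod_encode_le:
  assumes "c \<le> 7" "a \<le> y" "b \<le> y"
  shows "prod_encode (c, prod_encode (a, b)) \<le> pair_bound (pair_bound y)"
proof (rule prod_encode_le_pair_bound)
  show "prod_encode (a, b) \<le> pair_bound y + 7"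
    using prod_encode_le_pair_bound[of a y b] assms by simp
qed (use assms in simp)

fun depth :: "fm \<Rightarrow> nat" where
  "depth (FNeg f) = Suc (depth f)"
| "depth (FConj f g) = Suc (max (depth f) (depth g))"
| "depth (FDisj f g) = Suc (max (depth f) (depth g))"
| "depth (FEx x f) = Suc (depth f)"
| "depth (FAll x f) = Suc (depth f)"
| "depth _ = 0"

fun max_num :: "fm \<Rightarrow> nat" where
  "max_num (FEq x y) = max x y"
| "max_num (FP i x) = max i x"
| "max_num (FE j x y) = max j (max x y)"
| "max_num (FNeg f) = max_num f"
| "max_num (FConj f g) = max (max_num f) (max_num g)"
| "max_num (FDisj f g) = max (max_num f) (max_num g)"
| "max_num (FEx x f) = max x (max_num f)"
| "max_num (FAll x f) = max x (max_num f)"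

lemma funpow_pair_bound_step:
  "(pair_bound ^^ (2 * Suc d + 3)) m = pair_bound (pair_bound ((pair_bound ^^ (2 * d + 3)) m))"
  by (simp add: numeral_eq_Suc)

lemma funpow_pair_bound_3: "(pair_bound ^^ 3) m = pair_bound (pair_bound (pair_bound m))"
  by (simp add: numeral_eq_Suc)

lemma fcode_le_funpow_pair_bound: "fcode f \<le> (pair_bound ^^ (2 * depth f + 3)) (max_num f)"
proof (induction f)
  case (FEq x y)
  have "fcode (FEq x y) \<le> pair_bound (pair_bound (max x y))"
    by (auto intro: tagged_prod_encode_le)
  then show ?case
    unfolding depth.simps max_num.simps mult_0_right add_0 funpow_pair_bound_3
    using le_pair_bound order_trans by blast
next
  case (FP i x)
  have "fcode (FP i x) \<le> pair_bound (pair_bound (max i x))"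
    by (auto intro: tagged_prod_encode_le)
  then show ?case
    unfolding depth.simps max_num.simps mult_0_right add_0 funpow_pair_bound_3
    using le_pair_bound order_trans by blast
next
  case (FE j x y)
  let ?m = "max j (max x y)"
  have "prod_encode (x, y) \<le> pair_bound ?m"
    by (rule prod_encode_le_pair_bound) auto
  moreover have "j \<le> pair_bound ?m"
    using le_pair_bound[of ?m] by simp
  ultimately have "fcode (FE j x y) \<le> pair_bound (pair_bound (pair_bound ?m))"
    by (simp add: tagged_prod_encode_le)
  then show ?case by (simp only: funpow_pair_bound_3 depth.simps max_num.simps mult_0_right add_0)
next
  case (FNeg f)
  let ?B = "(pair_bound ^^ (2 * depth f + 3)) (max_num f)"
  have "fcode (FNeg f) \<le> pair_bound ?B"
    using FNeg by (simp add: prod_encode_le_pair_bound)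
  also have "\<dots> \<le> pair_bound (pair_bound ?B)"
    by (rule le_pair_bound)
  finally show ?case by (simp only: funpow_pair_bound_step depth.simps max_num.simps)
next
  case (FConj f g)
  let ?B = "(pair_bound ^^ (2 * max (depth f) (depth g) + 3)) (max (max_num f) (max_num g))"
  have "fcode f \<le> ?B" "fcode g \<le> ?B"
    using FConj by (auto elim!: order_trans intro!: funpow_pair_bound_mono)
  then show ?case
    unfolding fcode.simps depth.simps max_num.simps funpow_pair_bound_step
    by (intro tagged_prod_encode_le) simp_all
next
  case (FDisj f g)
  let ?B = "(pair_bound ^^ (2 * max (depth f) (depth g) + 3)) (max (max_num f) (max_num g))"
  have "fcode f \<le> ?B" "fcode g \<le> ?B"
    using FDisj by (auto elim!: order_trans intro!: funpow_pair_bound_mono)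
  then show ?case
    unfolding fcode.simps depth.simps max_num.simps funpow_pair_bound_step
    by (intro tagged_prod_encode_le) simp_all
next
  case (FEx x f)
  let ?B = "(pair_bound ^^ (2 * depth f + 3)) (max x (max_num f))"
  have "x \<le> ?B" "fcode f \<le> ?B"
    using FEx funpow_pair_bound_mono[of 0 _ x "max x (max_num f)"]
    by (auto elim!: order_trans intro!: funpow_pair_bound_mono)
  then show ?case
    unfolding fcode.simps depth.simps max_num.simps funpow_pair_bound_step
    by (intro tagged_prod_encode_le) simp_all
next
  case (FAll x f)
  let ?B = "(pair_bound ^^ (2 * depth f + 3)) (max x (max_num f))"
  have "x \<le> ?B" "fcode f \<le> ?B"
    using FAll funpow_pair_bound_mono[of 0 _ x "max x (max_num f)"]
    by (auto elim!: order_trans intro!: funpow_pair_bound_mono)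
  then show ?case
    unfolding fcode.simps depth.simps max_num.simps funpow_pair_bound_step
    by (intro tagged_prod_encode_le) simp_all
qed

lemma fcode_le_code_bound:
  "depth f \<le> (k + 2) * (k + 2) \<Longrightarrow> max_num f \<le> k + 2 \<Longrightarrow> fcode f \<le> code_bound k"
  unfolding code_bound_def
  by (rule order_trans[OF fcode_le_funpow_pair_bound funpow_pair_bound_mono]) auto

section \<open>Reductions computed without communication\<close>

text \<open>The graph \<open>G'\<close> output by the zero-round reduction.\<close>
definition adj_graph :: "cgraph \<Rightarrow> cgraph" where
  "adj_graph G = \<lparr>verts = verts G, unary = \<lambda>i x. x \<in> verts G \<and> unary G i x,
     binary = \<lambda>j x y. j = 1 \<and> adj G x y\<rparr>"

lemma adj_irrefl: "\<not> adj G x x"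
  by (simp add: adj_def)

lemma adj_adj_graph [simp]: "adj (adj_graph G) = adj G"
  by (auto simp: fun_eq_iff adj_def adj_graph_def)

lemma verts_adj_graph [simp]: "verts (adj_graph G) = verts G"
  by (simp add: adj_graph_def)

lemma coloured_adj_graph: "coloured G \<Longrightarrow> coloured (adj_graph G)"
proof -
  assume "coloured G"
  then obtain s t where "inG s t G"
    by (auto simp: coloured_def)
  then have "inG s 1 (adj_graph G)"
    unfolding inG_def base_ok_def adj_adj_graph verts_adj_graph
    by (auto simp: adj_graph_def adj_def[of G])
  then show ?thesis
    unfolding coloured_def by blast
qed

definition encode_view :: "local_view \<Rightarrow> nat" where
  "encode_view lv = prod_encode (lv_k lv, prod_encode (lv_id lv,
     prod_encode (set_encode (lv_unary lv), set_encode (lv_nbrs lv))))"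

definition decode_output :: "(nat \<Rightarrow> fm) \<Rightarrow> nat \<Rightarrow> lout" where
  "decode_output \<phi> s = (case prod_decode s of (k, r) \<Rightarrow> case prod_decode r of (v, r') \<Rightarrow>
     case prod_decode r' of (u, n) \<Rightarrow>
     \<lparr>o_verts = {v}, o_lab = \<lambda>i x. i \<in> set_decode u,
      o_rel = (\<lambda>w. (1, v, w)) ` set_decode n, o_path = \<lambda>x y. [x, y], o_k = fcode (\<phi> k)\<rparr>)"

definition embed_algo :: "(nat \<Rightarrow> fm) \<Rightarrow> algo" where
  "embed_algo \<phi> = \<lparr>a_init = encode_view, a_send = \<lambda>_ _. None, a_update = \<lambda>s _. s,
     a_out = decode_output \<phi>\<rparr>"

lemma decode_output_encode_view:
  assumes "coloured G" "v \<in> verts G"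
  shows "decode_output \<phi> (encode_view (view G k v)) =
    \<lparr>o_verts = {v}, o_lab = \<lambda>i x. unary G i v, o_rel = (\<lambda>w. (1, v, w)) ` {w. adj G v w},
     o_path = \<lambda>x y. [x, y], o_k = fcode (\<phi> k)\<rparr>"
proof -
  obtain s t where G: "inG s t G"
    using assms(1) by (auto simp: coloured_def)
  have "finite {i. unary G i v}"
    by (rule finite_subset[of _ "{1..s}"]) (use G in \<open>auto simp: inG_def\<close>)
  moreover have "finite {w. adj G v w}"
    by (rule finite_subset[of _ "verts G"]) (use G in \<open>auto simp: inG_def base_ok_def adj_def\<close>)
  ultimately show ?thesis
    by (simp add: decode_output_def encode_view_def view_def)
qed

lemma red_ok_embed_algo:
  assumes G: "coloured G" and bound: "fcode (\<phi> k) \<le> p k"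
    and equiv: "(G, k) \<in> pyes P \<longleftrightarrow> (adj_graph G, fcode (\<phi> k)) \<in> pyes (DMC \<Phi>)"
  shows "red_ok M P (DMC \<Phi>) (embed_algo \<phi>) (\<lambda>_. 1) (\<lambda>_. 1) (\<lambda>_. 1) (\<lambda>_. 0) p B G k"
proof -
  define Out where "Out v = a_out (embed_algo \<phi>) (run (embed_algo \<phi>) M G k 0 v)" for v
  have Out: "Out v = \<lparr>o_verts = {v}, o_lab = \<lambda>i x. unary G i v,
       o_rel = (\<lambda>w. (1, v, w)) ` {w. adj G v w}, o_path = \<lambda>x y. [x, y], o_k = fcode (\<phi> k)\<rparr>"
    if "v \<in> verts G" for v
    using decode_output_encode_view[OF G that] by (simp add: Out_def embed_algo_def)
  have adj_verts: "adj G x y \<Longrightarrow> x \<in> verts G \<and> y \<in> verts G" for x y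
    by (simp add: adj_def)
  have unary_verts: "unary G i x \<Longrightarrow> x \<in> verts G" for i x
    using G by (auto simp: coloured_def inG_def base_ok_def)
  have out_graph: "out_graph G Out = adj_graph G"
    unfolding out_graph_def adj_graph_def Let_def
    using Out adj_verts unary_verts by (auto simp: fun_eq_iff)
  have host: "host G Out x = x" if "x \<in> verts G" for x
    unfolding host_def using Out that by (intro the_equality) auto
  have eta: "eta G Out x y = [x, y]" if "x \<in> verts G" "x < y" for x y
    unfolding eta_def using that host Out by simp
  have congestion: "card {(x, y). adj G x y \<and> x < y \<and> uses_edge (eta G Out x y) a b} \<le> 1"
    for a b
  proof -
    have "{(x, y). adj G x y \<and> x < y \<and> uses_edge (eta G Out x y) a b} \<subseteq> {(min a b, max a b)}"
      using eta adj_verts by (auto simp: uses_edge_def less_Suc_eq doubleton_eq_iff)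
    then show ?thesis
      using card_mono[of "{(min a b, max a b)}"] by fastforce
  qed
  have "(adj_graph G, fcode (\<phi> k)) \<in> pdom (DMC \<Phi>)"
    using coloured_adj_graph[OF G] by (simp add: DMC_def)
  then show ?thesis
    unfolding red_ok_def Let_def Out_def[symmetric] out_graph
    using Out bound equiv host eta adj_verts congestion
    by (auto simp: bandwidth_ok_def is_path_def)
qed

lemma dreduces_DMC_if_definable:
  assumes coloured: "\<And>G k. (G, k) \<in> pdom P \<Longrightarrow> coloured G"
    and in_\<Phi>: "\<And>k. \<phi> k \<in> \<Phi>" and sentence: "\<And>k. sentence (\<phi> k)"
    and "computable p" and bound: "\<And>k. fcode (\<phi> k) \<le> p k"
    and definable: "\<And>G k. (G, k) \<in> pdom P \<Longrightarrow> (G, k) \<in> pyes P \<longleftrightarrow> models (adj_graph G) (\<phi> k)"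
  shows "dreduces M P (DMC \<Phi>)"
proof -
  have "(G, k) \<in> pyes P \<longleftrightarrow> (adj_graph G, fcode (\<phi> k)) \<in> pyes (DMC \<Phi>)"
    if "(G, k) \<in> pdom P" for G k
    using that coloured coloured_adj_graph in_\<Phi> sentence definable
    by (auto simp: DMC_def fcode_inject)
  then show ?thesis
    unfolding dreduces_def using computable_const \<open>computable p\<close> coloured bound
    by (blast intro: red_ok_embed_algo)
qed

lemma sat_exs:
  "distinct xs \<Longrightarrow> sat G a (exs xs f) \<longleftrightarrow>
     (\<exists>g. (\<forall>x\<in>set xs. g x \<in> verts G) \<and> sat G (override_on a g (set xs)) f)"
proof (induction xs arbitrary: a)
  case Nil
  then show ?case by (simp add: exs_def)
next
  case (Cons x xs)
  then have "override_on (a(x := v)) g (set xs) = override_on a (g(x := v)) (set (x # xs))" for v g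
    by (auto simp: override_on_def)
  with Cons have "sat G a (exs (x # xs) f) \<longleftrightarrow> (\<exists>v\<in>verts G. \<exists>g. (\<forall>y\<in>set xs. g y \<in> verts G) \<and>
      sat G (override_on a (g(x := v)) (set (x # xs))) f)"
    by (simp add: exs_def)
  also have "\<dots> \<longleftrightarrow> (\<exists>g. (\<forall>y\<in>set (x # xs). g y \<in> verts G) \<and> sat G (override_on a g (set (x # xs))) f)"
  proof
    assume "\<exists>v\<in>verts G. \<exists>g. (\<forall>y\<in>set xs. g y \<in> verts G) \<and>
      sat G (override_on a (g(x := v)) (set (x # xs))) f"
    then obtain v g where "v \<in> verts G" "\<forall>y\<in>set xs. g y \<in> verts G"
      "sat G (override_on a (g(x := v)) (set (x # xs))) f"
      by blast
    then show "\<exists>g. (\<forall>y\<in>set (x # xs). g y \<in> verts G) \<and> sat G (override_on a g (set (x # xs))) f"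
      by (intro exI[of _ "g(x := v)"]) auto
  next
    assume "\<exists>g. (\<forall>y\<in>set (x # xs). g y \<in> verts G) \<and> sat G (override_on a g (set (x # xs))) f"
    then obtain g where "\<forall>y\<in>set (x # xs). g y \<in> verts G" "sat G (override_on a g (set (x # xs))) f"
      by blast
    then show "\<exists>v\<in>verts G. \<exists>g. (\<forall>y\<in>set xs. g y \<in> verts G) \<and>
      sat G (override_on a (g(x := v)) (set (x # xs))) f"
      by (intro bexI[of _ "g x"] exI[of _ g]) auto
  qed
  finally show ?case .
qed

lemma fvars_exs: "fvars (exs xs f) = fvars f - set xs"
  unfolding exs_def by (induction xs) auto

lemma depth_exs: "depth (exs xs f) = length xs + depth f"
  unfolding exs_def by (induction xs) auto

lemma max_num_exs: "\<forall>x\<in>set xs. x \<le> m \<Longrightarrow> max_num f \<le> m \<Longrightarrow> max_num (exs xs f) \<le> m"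
  unfolding exs_def by (induction xs) auto

text \<open>The empty conjunction and disjunction are \<open>0 = 0\<close> and \<open>0 \<noteq> 0\<close>, so variable \<open>0\<close> is free
  in both and has to be bound by every sentence built from them.\<close>
definition conjs :: "fm list \<Rightarrow> fm" where
  "conjs fs = foldr FConj fs (FEq 0 0)"

definition disjs :: "fm list \<Rightarrow> fm" where
  "disjs fs = foldr FDisj fs (FNeg (FEq 0 0))"

lemma sat_conjs: "sat G a (conjs fs) \<longleftrightarrow> (\<forall>f\<in>set fs. sat G a f)"
  unfolding conjs_def by (induction fs) auto

lemma sat_disjs: "sat G a (disjs fs) \<longleftrightarrow> (\<exists>f\<in>set fs. sat G a f)"
  unfolding disjs_def by (induction fs) auto

lemma fvars_conjs: "fvars (conjs fs) = insert 0 (\<Union>f\<in>set fs. fvars f)"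
  unfolding conjs_def by (induction fs) auto

lemma fvars_disjs: "fvars (disjs fs) = insert 0 (\<Union>f\<in>set fs. fvars f)"
  unfolding disjs_def by (induction fs) auto

lemma qfree_conjs: "\<forall>f\<in>set fs. qfree f \<Longrightarrow> qfree (conjs fs)"
  unfolding conjs_def by (induction fs) auto

lemma qfree_disjs: "\<forall>f\<in>set fs. qfree f \<Longrightarrow> qfree (disjs fs)"
  unfolding disjs_def by (induction fs) auto

lemma depth_conjs: "\<forall>f\<in>set fs. depth f \<le> d \<Longrightarrow> depth (conjs fs) \<le> length fs + d"
  unfolding conjs_def by (induction fs) auto

lemma depth_disjs: "\<forall>f\<in>set fs. depth f \<le> d \<Longrightarrow> depth (disjs fs) \<le> length fs + Suc d"
  unfolding disjs_def by (induction fs) auto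

lemma max_num_conjs: "\<forall>f\<in>set fs. max_num f \<le> m \<Longrightarrow> max_num (conjs fs) \<le> m"
  unfolding conjs_def by (induction fs) auto

lemma max_num_disjs: "\<forall>f\<in>set fs. max_num f \<le> m \<Longrightarrow> max_num (disjs fs) \<le> m"
  unfolding disjs_def by (induction fs) auto

definition witness_vars :: "nat \<Rightarrow> nat list" where
  "witness_vars k = [1..<k+1]"

lemma set_witness_vars [simp]: "set (witness_vars k) = {1..k}"
  by (auto simp: witness_vars_def)

lemma length_witness_vars [simp]: "length (witness_vars k) = k"
  by (simp add: witness_vars_def)

lemma distinct_witness_vars [simp]: "distinct (witness_vars k)"
  by (simp add: witness_vars_def)

section \<open>Multicoloured independent set\<close>

definition mis_matrix :: "nat \<Rightarrow> fm" where
  "mis_matrix k = conjs (map (\<lambda>i. FP i i) (witness_vars k) @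
     [FNeg (FE 1 i j). i \<leftarrow> witness_vars k, j \<leftarrow> witness_vars k])"

definition mis_sentence :: "nat \<Rightarrow> fm" where
  "mis_sentence k = exs (0 # witness_vars k) (mis_matrix k)"

lemma sat_mis_matrix:
  "sat (adj_graph G) a (mis_matrix k) \<longleftrightarrow>
    (\<forall>i\<in>{1..k}. a i \<in> verts G \<and> unary G i (a i)) \<and> (\<forall>i\<in>{1..k}. \<forall>j\<in>{1..k}. \<not> adj G (a i) (a j))"
  by (simp add: mis_matrix_def sat_conjs adj_graph_def ball_Un)

lemma mis_sentence_in_Sigma_t1: "mis_sentence k \<in> Sigma_t1 1"
proof -
  have "qfree (mis_matrix k)"
    unfolding mis_matrix_def by (rule qfree_conjs) auto
  then show ?thesis
    unfolding mis_sentence_def by auto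
qed

lemma sentence_mis_sentence: "sentence (mis_sentence k)"
  unfolding sentence_def mis_sentence_def mis_matrix_def fvars_exs fvars_conjs by auto

lemma fcode_mis_sentence_le: "fcode (mis_sentence k) \<le> code_bound k"
proof (rule fcode_le_code_bound)
  let ?fs = "map (\<lambda>i. FP i i) (witness_vars k) @
     [FNeg (FE 1 i j). i \<leftarrow> witness_vars k, j \<leftarrow> witness_vars k]"
  have "length ?fs = k + k * k"
    by (simp add: length_concat sum_list_triv o_def)
  moreover have "depth (conjs ?fs) \<le> length ?fs + 1"
    by (rule depth_conjs) auto
  ultimately show "depth (mis_sentence k) \<le> (k + 2) * (k + 2)"
    unfolding mis_sentence_def mis_matrix_def depth_exs by (simp add: algebra_simps)
  have "max_num (conjs ?fs) \<le> k + 2"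
    by (rule max_num_conjs) auto
  then show "max_num (mis_sentence k) \<le> k + 2"
    unfolding mis_sentence_def mis_matrix_def by (intro max_num_exs) auto
qed

lemma models_mis_sentence:
  "models (adj_graph G) (mis_sentence k) \<longleftrightarrow> (\<exists>g. (\<forall>x\<in>{0..k}. g x \<in> verts G) \<and>
     (\<forall>i\<in>{1..k}. unary G i (g i)) \<and> (\<forall>i\<in>{1..k}. \<forall>j\<in>{1..k}. \<not> adj G (g i) (g j)))"
proof -
  have vars: "set (0 # witness_vars k) = {0..k}" and distinct: "distinct (0 # witness_vars k)"
    by auto
  show ?thesis
    unfolding models_def mis_sentence_def sat_exs[OF distinct] vars sat_mis_matrix
    by (auto simp: override_on_def cong: ball_cong)
qed

lemma MIS_iff_models:
  assumes "(G, k) \<in> pdom MIS"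
  shows "(G, k) \<in> pyes MIS \<longleftrightarrow> models (adj_graph G) (mis_sentence k)"
proof -
  have "k \<ge> 1" and unary_verts: "\<And>i v. unary G i v \<Longrightarrow> v \<in> verts G"
    using assms by (auto simp: MIS_def inG_def base_ok_def)
  have "(\<exists>f. (\<forall>i\<in>{1..k}. unary G i (f i)) \<and>
        (\<forall>i\<in>{1..k}. \<forall>j\<in>{1..k}. i \<noteq> j \<longrightarrow> \<not> adj G (f i) (f j))) \<longleftrightarrow>
      (\<exists>g. (\<forall>x\<in>{0..k}. g x \<in> verts G) \<and> (\<forall>i\<in>{1..k}. unary G i (g i)) \<and>
        (\<forall>i\<in>{1..k}. \<forall>j\<in>{1..k}. \<not> adj G (g i) (g j)))" (is "?R \<longleftrightarrow> ?L")
  proof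
    assume ?R
    then obtain f where f: "\<forall>i\<in>{1..k}. unary G i (f i)"
      and independent: "\<forall>i\<in>{1..k}. \<forall>j\<in>{1..k}. i \<noteq> j \<longrightarrow> \<not> adj G (f i) (f j)"
      by blast
    have "\<forall>i\<in>{1..k}. f i \<in> verts G"
      using f unary_verts by blast
    define g where "g x = (if x = 0 then f 1 else f x)" for x
    have "\<forall>x\<in>{0..k}. g x \<in> verts G"
      using \<open>\<forall>i\<in>{1..k}. f i \<in> verts G\<close> \<open>k \<ge> 1\<close> by (auto simp: g_def)
    moreover have "\<forall>i\<in>{1..k}. \<forall>j\<in>{1..k}. \<not> adj G (f i) (f j)"
      using independent adj_irrefl by metis
    then have "\<forall>i\<in>{1..k}. \<forall>j\<in>{1..k}. \<not> adj G (g i) (g j)"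
      by (simp add: g_def)
    ultimately show ?L
      using f by (auto simp: g_def)
  qed blast
  then show ?thesis
    using assms by (simp add: models_mis_sentence MIS_def)
qed

lemma MIS_in_DistW_1: "MIS \<in> DistW M 1"
  unfolding DistW_def mem_Collect_eq
proof (rule dreduces_DMC_if_definable)
  show "coloured G" if "(G, k) \<in> pdom MIS" for G k
    using that by (auto simp: MIS_def coloured_def)
qed (fact mis_sentence_in_Sigma_t1 sentence_mis_sentence computable_code_bound
    fcode_mis_sentence_le MIS_iff_models)+

section \<open>Red-blue dominating set\<close>

lemma ex_card_le_cover_iff_indexed:
  assumes "finite S" "S \<noteq> {} \<or> B \<noteq> {}"
  shows "(\<exists>D\<subseteq>S. card D \<le> k \<and> (\<forall>b\<in>B. \<exists>d\<in>D. R d b)) \<longleftrightarrow>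
    (\<exists>g. (\<forall>i\<in>{1..k}. g i \<in> S) \<and> (\<forall>b\<in>B. \<exists>i\<in>{1..k}. R (g i) b))"
proof
  assume "\<exists>D\<subseteq>S. card D \<le> k \<and> (\<forall>b\<in>B. \<exists>d\<in>D. R d b)"
  then obtain D where D: "D \<subseteq> S" "card D \<le> k" and cover: "\<forall>b\<in>B. \<exists>d\<in>D. R d b"
    by blast
  obtain h where h: "bij_betw h {1..card D} D"
    using ex_bij_betw_nat_finite_1 finite_subset[OF D(1) assms(1)] by blast
  obtain w where "w \<in> S"
    using assms(2) cover D(1) by blast
  define g where "g i = (if i \<le> card D then h i else w)" for i
  have "\<forall>i\<in>{1..k}. g i \<in> S"
    using h D(1) \<open>w \<in> S\<close> by (auto simp: g_def bij_betw_def)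
  moreover have "\<forall>b\<in>B. \<exists>i\<in>{1..k}. R (g i) b"
  proof
    fix b assume "b \<in> B"
    then obtain d where "d \<in> D" "R d b"
      using cover by blast
    then obtain i where "i \<in> {1..card D}" "h i = d"
      using h by (metis bij_betw_imp_surj_on imageE)
    then show "\<exists>i\<in>{1..k}. R (g i) b"
      using \<open>R d b\<close> D(2) by (intro bexI[of _ i]) (auto simp: g_def)
  qed
  ultimately show "\<exists>g. (\<forall>i\<in>{1..k}. g i \<in> S) \<and> (\<forall>b\<in>B. \<exists>i\<in>{1..k}. R (g i) b)"
    by blast
next
  assume "\<exists>g. (\<forall>i\<in>{1..k}. g i \<in> S) \<and> (\<forall>b\<in>B. \<exists>i\<in>{1..k}. R (g i) b)"
  then obtain g where "\<forall>i\<in>{1..k}. g i \<in> S" "\<forall>b\<in>B. \<exists>i\<in>{1..k}. R (g i) b"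
    by blast
  moreover have "card (g ` {1..k}) \<le> k"
    using card_image_le[of "{1..k}" g] by simp
  ultimately show "\<exists>D\<subseteq>S. card D \<le> k \<and> (\<forall>b\<in>B. \<exists>d\<in>D. R d b)"
    by (intro exI[of _ "g ` {1..k}"]) auto
qed

definition rbds_matrix :: "nat \<Rightarrow> fm" where
  "rbds_matrix k = conjs (map (\<lambda>i. FP 1 i) (witness_vars k) @
     [FDisj (FNeg (FP 2 0)) (disjs (map (\<lambda>i. FE 1 i 0) (witness_vars k)))])"

definition rbds_sentence :: "nat \<Rightarrow> fm" where
  "rbds_sentence k = exs (witness_vars k) (FAll 0 (rbds_matrix k))"

lemma sat_rbds_matrix:
  "sat (adj_graph G) a (rbds_matrix k) \<longleftrightarrow>
    (\<forall>i\<in>{1..k}. a i \<in> verts G \<and> unary G 1 (a i)) \<and>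
    (a 0 \<in> verts G \<and> unary G 2 (a 0) \<longrightarrow> (\<exists>i\<in>{1..k}. adj G (a i) (a 0)))"
  by (auto simp: rbds_matrix_def sat_conjs sat_disjs adj_graph_def)

lemma rbds_sentence_in_Sigma_t1: "rbds_sentence k \<in> Sigma_t1 2"
proof -
  have "qfree (rbds_matrix k)"
    unfolding rbds_matrix_def by (auto intro!: qfree_conjs qfree_disjs)
  then have "FAll 0 (rbds_matrix k) \<in> Pi1 1"
    by (auto simp: alls_def intro!: exI[of _ "[0]"])
  then show ?thesis
    unfolding rbds_sentence_def numeral_2_eq_2 by auto
qed

lemma sentence_rbds_sentence: "sentence (rbds_sentence k)"
  unfolding sentence_def rbds_sentence_def rbds_matrix_def
  by (auto simp: fvars_exs fvars_conjs fvars_disjs)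

lemma fcode_rbds_sentence_le: "fcode (rbds_sentence k) \<le> code_bound k"
proof (rule fcode_le_code_bound)
  let ?fs = "map (\<lambda>i. FP 1 i) (witness_vars k) @
     [FDisj (FNeg (FP 2 0)) (disjs (map (\<lambda>i. FE 1 i 0) (witness_vars k)))]"
  have "depth (disjs (map (\<lambda>i. FE 1 i 0) (witness_vars k))) \<le> k + 1"
    using depth_disjs[of "map (\<lambda>i. FE 1 i 0) (witness_vars k)" 0] by simp
  then have "depth (conjs ?fs) \<le> length ?fs + (k + 2)"
    by (intro depth_conjs) auto
  then show "depth (rbds_sentence k) \<le> (k + 2) * (k + 2)"
    unfolding rbds_sentence_def rbds_matrix_def depth_exs by (simp add: algebra_simps)
  have "max_num (disjs (map (\<lambda>i. FE 1 i 0) (witness_vars k))) \<le> k + 2"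
    by (rule max_num_disjs) auto
  then have "max_num (conjs ?fs) \<le> k + 2"
    by (intro max_num_conjs) auto
  then show "max_num (rbds_sentence k) \<le> k + 2"
    unfolding rbds_sentence_def rbds_matrix_def by (intro max_num_exs) auto
qed

lemma models_rbds_sentence:
  "models (adj_graph G) (rbds_sentence k) \<longleftrightarrow> (\<exists>g. (\<forall>i\<in>{1..k}. g i \<in> verts G) \<and>
     (\<forall>v\<in>verts G. (\<forall>i\<in>{1..k}. unary G 1 (g i)) \<and>
       (unary G 2 v \<longrightarrow> (\<exists>i\<in>{1..k}. adj G (g i) v))))"
  unfolding models_def rbds_sentence_def sat_exs[OF distinct_witness_vars] sat.simps(8) sat_rbds_matrix
  by (auto simp: override_on_def cong: ball_cong)

lemma RBDS_iff_models:
  assumes "(G, k) \<in> pdom RBDS"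
  shows "(G, k) \<in> pyes RBDS \<longleftrightarrow> models (adj_graph G) (rbds_sentence k)"
proof -
  let ?red = "{v. unary G 1 v}" and ?blue = "{v. unary G 2 v}"
  have colouring: "\<forall>v\<in>verts G. unary G 1 v \<longleftrightarrow> \<not> unary G 2 v"
    and "finite (verts G)" "verts G \<noteq> {}" and unary_verts: "\<And>i v. unary G i v \<Longrightarrow> v \<in> verts G"
    using assms by (auto simp: RBDS_def inG_def base_ok_def)
  then have "finite ?red"
    by (metis finite_subset mem_Collect_eq subsetI)
  have "?red \<noteq> {} \<or> ?blue \<noteq> {}"
    using colouring \<open>verts G \<noteq> {}\<close> by blast
  have "models (adj_graph G) (rbds_sentence k) \<longleftrightarrow>
      (\<exists>g. (\<forall>i\<in>{1..k}. g i \<in> ?red) \<and> (\<forall>b\<in>?blue. \<exists>i\<in>{1..k}. adj G (g i) b))"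
    unfolding models_rbds_sentence using \<open>verts G \<noteq> {}\<close> unary_verts by blast
  also have "\<dots> \<longleftrightarrow> (\<exists>D\<subseteq>?red. card D \<le> k \<and> (\<forall>b\<in>?blue. \<exists>d\<in>D. adj G d b))"
    by (rule ex_card_le_cover_iff_indexed[symmetric]) fact+
  finally show ?thesis
    using assms by (auto simp: RBDS_def)
qed

lemma RBDS_in_DistW_2: "RBDS \<in> DistW M 2"
  unfolding DistW_def mem_Collect_eq
proof (rule dreduces_DMC_if_definable)
  show "coloured G" if "(G, k) \<in> pdom RBDS" for G k
    using that by (auto simp: RBDS_def coloured_def)
qed (fact rbds_sentence_in_Sigma_t1 sentence_rbds_sentence computable_code_bound
    fcode_rbds_sentence_le RBDS_iff_models)+

theorem mainTheorem6:
  fixes M :: dmodel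
  shows "MIS \<in> DistW M 1 \<and> RBDS \<in> DistW M 2"
  using MIS_in_DistW_1 RBDS_in_DistW_2 by blast

end
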